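(* Let $s\in[0,1]$, $1<p<\infty$, and let $f$ be locally integrable on $\mathbb R^N$. Then, with values in $[0,\infty]$, $$\|f_s^\#\|_{L^p(\mathbb R^N)}^p=\lim_{\lambda\to\infty}\lambda^p\mathcal L^{N+1}\Big(\Big\{(x,R)\in\mathbb R^N\times(0,\infty):\frac{f^\#_{1/R,s}(x)}{R^{1/p}}>\lambda\Big\}\Big)=\sup_{\lambda>0}\lambda^p\mathcal L^{N+1}\Big(\Big\{(x,R)\in\mathbb R^N\times(0,\infty):\frac{f^\#_{1/R,s}(x)}{R^{1/p}}>\lambda\Big\}\Big).$$
   Context: For $R>0$, $s\in[0,1]$: $f^\#_{R,s}(x)=\sup_{0<r<R}\frac{1}{r^{s+N}}\int_{B(x,r)}|f(y)-(f)_{B(x,r)}|\,dy$ and $f^\#_s(x)=\sup_{r>0}\frac{1}{r^{s+N}}\int_{B(x,r)}|f(y)-(f)_{B(x,r)}|\,dy$, where $(f)_B$ denotes the Lebesgue average of $f$ over the ball $B$. $\|f\|_{C^s_p(\mathbb R^N)}:=\|f^\#_s\|_{L^p(\mathbb R^N)}$. *)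

theory Defs
  imports "HOL-Analysis.Analysis"
begin

definition locally_integrable :: "('a::euclidean_space \<Rightarrow> real) \<Rightarrow> bool" where
  "locally_integrable f \<longleftrightarrow> (\<forall>K. compact K \<longrightarrow> set_integrable lebesgue K f)"

definition ball_avg :: "('a::euclidean_space \<Rightarrow> real) \<Rightarrow> 'a \<Rightarrow> real \<Rightarrow> real" where
  "ball_avg f x r = (LINT y:ball x r|lebesgue. f y) / measure lebesgue (ball x r)"

definition osc :: "real \<Rightarrow> ('a::euclidean_space \<Rightarrow> real) \<Rightarrow> 'a \<Rightarrow> real \<Rightarrow> ennreal" where
  "osc s f x r = ennreal (1 / r powr (s + real DIM('a))) *
     (\<integral>\<^sup>+ y. ennreal (\<bar>f y - ball_avg f x r\<bar>) * indicator (ball x r) y \<partial>lebesgue)"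

definition sharp_trunc :: "real \<Rightarrow> real \<Rightarrow> ('a::euclidean_space \<Rightarrow> real) \<Rightarrow> 'a \<Rightarrow> ennreal" where
  "sharp_trunc R s f x = (SUP r\<in>{0<..<R}. osc s f x r)"

definition sharp :: "real \<Rightarrow> ('a::euclidean_space \<Rightarrow> real) \<Rightarrow> 'a \<Rightarrow> ennreal" where
  "sharp s f x = (SUP r\<in>{0<..}. osc s f x r)"

definition enn_powr :: "ennreal \<Rightarrow> real \<Rightarrow> ennreal" where
  "enn_powr x p = (if x = \<infinity> then \<infinity> else ennreal (enn2real x powr p))"

definition level_quantity :: "real \<Rightarrow> real \<Rightarrow> ('a::euclidean_space \<Rightarrow> real) \<Rightarrow> real \<Rightarrow> ennreal" where
  "level_quantity s p f lam = ennreal (lam powr p) *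
     emeasure (lebesgue :: ('a \<times> real) measure)
       {(x, R). 0 < R \<and> sharp_trunc (1 / R) s f x * ennreal (R powr (- 1 / p)) > ennreal lam}"

end

theory Submission
  imports Defs
begin

text \<open>
  Fix \<open>x\<close> and write \<open>F = f\<^sup>#\<^sub>s(x)\<close>. The \<open>R\<close>-section of the level set at height \<open>\<lambda>\<close> is an interval
  contained in \<open>(0, (F/\<lambda>)\<^sup>p)\<close>; conversely, if \<open>M < F\<close> is witnessed by a radius \<open>r\<close>, it contains
  \<open>(0, (M/\<lambda>)\<^sup>p)\<close> as soon as \<open>(M/\<lambda>)\<^sup>p \<le> 1/r\<close>. So \<open>\<lambda>\<^sup>p\<close> times the measure of the section is at most
  \<open>F\<^sup>p\<close> and tends to \<open>F\<^sup>p\<close>. Tonelli, Fatou's lemma and this uniform bound give both the limit and the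
  supremum. Measurability holds because the oscillation is left-continuous in the radius, so all
  suprema may be taken over rational radii, once \<open>f\<close> is replaced by a Borel representative.
\<close>

section \<open>The level sets in the radial variable\<close>

lemma less_mult_powr_neg_inverse_iff:
  fixes R lam p c :: real
  assumes R: "0 < R" and lam: "0 < lam" and p: "0 < p" and c: "0 \<le> c"
  shows "lam < c * R powr (-1/p) \<longleftrightarrow> R < (c/lam) powr p"
proof -
  have "c * R powr (-1/p) = c / R powr (1/p)"
    by (simp add: powr_minus divide_inverse minus_divide_left)
  then have "lam < c * R powr (-1/p) \<longleftrightarrow> R powr (1/p) < c / lam"
    using R lam by (simp add: pos_less_divide_eq mult.commute)
  also have "\<dots> \<longleftrightarrow> R < (c/lam) powr p"
  proof
    assume "R powr (1/p) < c/lam"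
    then have "(R powr (1/p)) powr p < (c/lam) powr p"
      using p by (intro powr_less_mono2) auto
    then show "R < (c/lam) powr p"
      using R p by (simp add: powr_powr)
  next
    assume "R < (c/lam) powr p"
    then have "R powr (1/p) < ((c/lam) powr p) powr (1/p)"
      using R p by (intro powr_less_mono2) auto
    then show "R powr (1/p) < c/lam"
      using lam c p by (simp add: powr_powr)
  qed
  finally show ?thesis .
qed

definition radial_level_set :: "(real \<Rightarrow> ennreal) \<Rightarrow> real \<Rightarrow> real \<Rightarrow> real set" where
  "radial_level_set \<omega> p lam =
     {R. 0 < R \<and> (SUP r\<in>{0<..<1/R}. \<omega> r) * ennreal (R powr (-1/p)) > ennreal lam}"

lemma is_interval_radial_level_set:
  assumes "0 < p"
  shows "is_interval (radial_level_set \<omega> p lam)"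
  unfolding is_interval_1
proof (intro ballI allI impI)
  fix a b x assume a: "a \<in> radial_level_set \<omega> p lam" and b: "b \<in> radial_level_set \<omega> p lam"
    and x: "a \<le> x \<and> x \<le> b"
  have "0 < x" using a x by (simp add: radial_level_set_def)
  have "1/b \<le> 1/x"
    using \<open>0 < x\<close> x by (intro divide_left_mono) auto
  then have "(SUP r\<in>{0<..<1/b}. \<omega> r) \<le> (SUP r\<in>{0<..<1/x}. \<omega> r)"
    by (intro SUP_subset_mono) auto
  moreover have "b powr (-1/p) \<le> x powr (-1/p)"
    using \<open>0 < x\<close> x assms by (intro powr_mono2') auto
  ultimately have "(SUP r\<in>{0<..<1/b}. \<omega> r) * ennreal (b powr (-1/p))
      \<le> (SUP r\<in>{0<..<1/x}. \<omega> r) * ennreal (x powr (-1/p))"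
    by (intro mult_mono) auto
  with b \<open>0 < x\<close> show "x \<in> radial_level_set \<omega> p lam"
    by (auto simp: radial_level_set_def)
qed

lemma radial_level_set_borel [measurable]:
  "0 < p \<Longrightarrow> radial_level_set \<omega> p lam \<in> sets borel"
  by (intro real_interval_borel_measurable is_interval_radial_level_set)

lemma radial_level_set_subset_Ioo:
  assumes p: "0 < p" and lam: "0 < lam" and c: "(SUP r\<in>{0<..}. \<omega> r) = ennreal c" "0 \<le> c"
  shows "radial_level_set \<omega> p lam \<subseteq> {0<..<(c/lam) powr p}"
proof
  fix R assume "R \<in> radial_level_set \<omega> p lam"
  then have R: "0 < R" and lt: "ennreal lam < (SUP r\<in>{0<..<1/R}. \<omega> r) * ennreal (R powr (-1/p))"
    by (auto simp: radial_level_set_def)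
  have "(SUP r\<in>{0<..<1/R}. \<omega> r) \<le> ennreal c"
    unfolding c(1)[symmetric] by (rule SUP_subset_mono) auto
  then have "(SUP r\<in>{0<..<1/R}. \<omega> r) * ennreal (R powr (-1/p)) \<le> ennreal (c * R powr (-1/p))"
    using c by (auto intro: mult_right_mono simp: ennreal_mult)
  with lt have "ennreal lam < ennreal (c * R powr (-1/p))"
    by (rule less_le_trans)
  then have "lam < c * R powr (-1/p)"
    using lam by (simp add: ennreal_less_iff)
  with R show "R \<in> {0<..<(c/lam) powr p}"
    using less_mult_powr_neg_inverse_iff[OF R lam p c(2)] by simp
qed

lemma Ioo_subset_radial_level_set:
  assumes p: "0 < p" and lam: "0 < lam" and M: "0 < M" "ennreal M \<le> \<omega> r"
    and r: "0 < r" and small: "(M/lam) powr p \<le> 1/r"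
  shows "{0<..<(M/lam) powr p} \<subseteq> radial_level_set \<omega> p lam"
proof
  fix R assume "R \<in> {0<..<(M/lam) powr p}"
  then have R: "0 < R" "R < (M/lam) powr p" by auto
  have "R * r < (M/lam) powr p * r"
    using R r by simp
  also have "\<dots> \<le> 1"
    using small r by (simp add: pos_le_divide_eq)
  finally have "r < 1/R"
    using R by (simp add: pos_less_divide_eq mult.commute)
  with r M have sup: "ennreal M \<le> (SUP r\<in>{0<..<1/R}. \<omega> r)"
    by (auto intro: SUP_upper2)
  have "lam < M * R powr (-1/p)"
    using less_mult_powr_neg_inverse_iff[OF R(1) lam p] M R by simp
  then have "ennreal lam < ennreal (M * R powr (-1/p))"
    using lam by (simp add: ennreal_less_iff)
  also have "\<dots> = ennreal M * ennreal (R powr (-1/p))"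
    using M by (simp add: ennreal_mult)
  also have "\<dots> \<le> (SUP r\<in>{0<..<1/R}. \<omega> r) * ennreal (R powr (-1/p))"
    using sup by (rule mult_right_mono) simp
  finally show "R \<in> radial_level_set \<omega> p lam"
    using R by (simp add: radial_level_set_def)
qed

lemma enn_powr_ennreal: "0 \<le> c \<Longrightarrow> enn_powr (ennreal c) p = ennreal (c powr p)"
  by (simp add: enn_powr_def)

lemma radial_level_measure_le:
  assumes p: "0 < p" and lam: "0 < lam"
  shows "ennreal (lam powr p) * emeasure lborel (radial_level_set \<omega> p lam)
     \<le> enn_powr (SUP r\<in>{0<..}. \<omega> r) p"
proof (cases "(SUP r\<in>{0<..}. \<omega> r)")
  case (real c)
  then have "radial_level_set \<omega> p lam \<subseteq> {0<..<(c/lam) powr p}"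
    by (intro radial_level_set_subset_Ioo p lam) auto
  then have "emeasure lborel (radial_level_set \<omega> p lam) \<le> emeasure lborel {0<..<(c/lam) powr p}"
    by (rule emeasure_mono) simp
  then have "ennreal (lam powr p) * emeasure lborel (radial_level_set \<omega> p lam)
      \<le> ennreal (lam powr p * (c/lam) powr p)"
    by (simp add: ennreal_mult mult_left_mono)
  also have "lam powr p * (c/lam) powr p = c powr p"
    using lam real by (simp add: powr_mult[symmetric])
  finally show ?thesis
    using real by (simp add: enn_powr_ennreal)
qed (simp add: enn_powr_def)

lemma less_enn_powrE:
  assumes p: "0 < p" and a: "0 \<le> a" and lt: "ennreal a < enn_powr F p"
  obtains M where "0 < M" "ennreal M < F" "a < M powr p"
proof -
  have "\<exists>M. a powr (1/p) < M \<and> ennreal M < F"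
  proof (cases F)
    case (real c)
    with lt a have "a < c powr p"
      by (simp add: enn_powr_ennreal ennreal_less_iff)
    then have "a powr (1/p) < (c powr p) powr (1/p)"
      using a p by (intro powr_less_mono2) auto
    then have "a powr (1/p) < c"
      using p real by (simp add: powr_powr)
    then show ?thesis
      using real by (intro exI[of _ "(a powr (1/p) + c) / 2"]) (auto simp: ennreal_less_iff)
  qed (auto intro: exI[of _ "a powr (1/p) + 1"])
  then obtain M where M: "a powr (1/p) < M" "ennreal M < F"
    by blast
  have "a = (a powr (1/p)) powr p"
    using a p by (simp add: powr_powr)
  also have "\<dots> < M powr p"
    using M p by (intro powr_less_mono2) auto
  finally show ?thesis
    using M by (intro that[of M]) (auto intro: le_less_trans[OF powr_ge_zero])
qed

lemma radial_level_measure_tendsto: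
  assumes p: "0 < p"
  shows "((\<lambda>lam. ennreal (lam powr p) * emeasure lborel (radial_level_set \<omega> p lam))
     \<longlongrightarrow> enn_powr (SUP r\<in>{0<..}. \<omega> r) p) at_top"
    (is "(?m \<longlongrightarrow> ?L) at_top")
proof (rule order_tendstoI)
  fix a assume "?L < a"
  show "\<forall>\<^sub>F lam in at_top. ?m lam < a"
    using eventually_gt_at_top[of 0]
  proof eventually_elim
    fix lam :: real assume "0 < lam"
    show "?m lam < a"
      using radial_level_measure_le[OF p \<open>0 < lam\<close>] \<open>?L < a\<close> by (rule le_less_trans)
  qed
next
  fix a assume "a < ?L"
  then obtain a' where a': "a = ennreal a'" "0 \<le> a'"
    by (cases a) auto
  with \<open>a < ?L\<close> obtain M where M: "0 < M" "ennreal M < (SUP r\<in>{0<..}. \<omega> r)" "a' < M powr p"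
    using less_enn_powrE[OF p] by metis
  then obtain r where r: "0 < r" "ennreal M < \<omega> r"
    by (auto simp: less_SUP_iff)
  have "\<forall>\<^sub>F lam in at_top. max 0 (M * (1/r) powr (-1/p)) < lam"
    by (rule eventually_gt_at_top)
  then show "\<forall>\<^sub>F lam in at_top. a < ?m lam"
  proof eventually_elim
    fix lam assume "max 0 (M * (1/r) powr (-1/p)) < lam"
    then have lam: "0 < lam" and "\<not> lam < M * (1/r) powr (-1/p)"
      by auto
    then have "(M/lam) powr p \<le> 1/r"
      using less_mult_powr_neg_inverse_iff[of "1/r" lam p M] r M p by simp
    then have sub: "{0<..<(M/lam) powr p} \<subseteq> radial_level_set \<omega> p lam"
      using Ioo_subset_radial_level_set[OF p lam M(1) _ r(1)] r by simp
    have "a < ennreal (M powr p)"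
      using a' M by (simp add: ennreal_less_iff)
    also have "M powr p = lam powr p * (M/lam) powr p"
      using lam M by (simp add: powr_mult[symmetric])
    also have "ennreal \<dots> = ennreal (lam powr p) * emeasure lborel {0<..<(M/lam) powr p}"
      by (simp add: ennreal_mult)
    also have "\<dots> \<le> ?m lam"
      using p by (intro mult_left_mono emeasure_mono[OF sub]) auto
    finally show "a < ?m lam" .
  qed
qed

section \<open>Limits of integrals dominated by their limit\<close>

lemma nn_integral_tendsto_at_top:
  fixes f :: "real \<Rightarrow> 'a \<Rightarrow> ennreal"
  assumes meas: "\<And>lam. f lam \<in> borel_measurable M"
    and lim: "\<And>x. ((\<lambda>lam. f lam x) \<longlongrightarrow> g x) at_top"
    and bound: "\<forall>\<^sub>F lam in at_top. \<forall>x. f lam x \<le> g x"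
  shows "((\<lambda>lam. \<integral>\<^sup>+ x. f lam x \<partial>M) \<longlongrightarrow> (\<integral>\<^sup>+ x. g x \<partial>M)) at_top"
proof (rule tendsto_at_topI_sequentially)
  fix X :: "nat \<Rightarrow> real" assume X: "filterlim X at_top sequentially"
  define I where "I n = (\<integral>\<^sup>+ x. f (X n) x \<partial>M)" for n
  have "(\<integral>\<^sup>+ x. g x \<partial>M) = (\<integral>\<^sup>+ x. liminf (\<lambda>n. f (X n) x) \<partial>M)"
    by (intro nn_integral_cong lim_imp_Liminf[symmetric] trivial_limit_sequentially
        filterlim_compose[OF lim X])
  also have "\<dots> \<le> liminf I"
    unfolding I_def by (rule nn_integral_liminf) (rule meas)
  finally have "(\<integral>\<^sup>+ x. g x \<partial>M) \<le> liminf I" .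
  moreover have "\<forall>\<^sub>F n in sequentially. I n \<le> (\<integral>\<^sup>+ x. g x \<partial>M)"
    using eventually_compose_filterlim[OF bound X]
    by eventually_elim (auto simp: I_def intro: nn_integral_mono)
  then have "limsup I \<le> (\<integral>\<^sup>+ x. g x \<partial>M)"
    by (rule Limsup_bounded)
  moreover have "liminf I \<le> limsup I"
    by (rule Liminf_le_Limsup) simp
  ultimately show "I \<longlonglongrightarrow> (\<integral>\<^sup>+ x. g x \<partial>M)"
    by (intro Liminf_eq_Limsup) auto
qed

lemma tendsto_at_top_eq_SUP:
  fixes F :: "real \<Rightarrow> 'b::{complete_linorder, linorder_topology}"
  assumes lim: "(F \<longlongrightarrow> L) at_top" and bound: "\<And>lam. 0 < lam \<Longrightarrow> F lam \<le> L"
  shows "L = (SUP lam\<in>{0<..}. F lam)"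
proof (rule antisym)
  have "\<forall>\<^sub>F lam in at_top. F lam \<le> (SUP lam\<in>{0<..}. F lam)"
    using eventually_gt_at_top[of 0] by eventually_elim (auto intro: SUP_upper)
  then show "L \<le> (SUP lam\<in>{0<..}. F lam)"
    by (intro tendsto_upperbound[OF lim]) auto
  show "(SUP lam\<in>{0<..}. F lam) \<le> L"
    by (rule SUP_least) (auto intro: bound)
qed

section \<open>Oscillation of a Borel function integrable on balls\<close>

lemma indicator_ball_tendsto_left:
  fixes q :: "nat \<Rightarrow> real"
  assumes qlt: "\<And>n. q n < r" and ql: "q \<longlonglongrightarrow> r"
  shows "(\<lambda>n. indicator (ball x (q n)) y :: real) \<longlonglongrightarrow> indicator (ball x r) y"
proof (cases "dist x y < r")
  case True
  have "\<forall>\<^sub>F n in sequentially. dist x y < q n"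
    using ql True by (rule order_tendstoD)
  then have "\<forall>\<^sub>F n in sequentially. indicator (ball x (q n)) y = (indicator (ball x r) y :: real)"
    by eventually_elim (use True in \<open>simp add: indicator_def\<close>)
  then show ?thesis
    by (rule tendsto_eventually)
next
  case False
  then have "indicator (ball x (q n)) y = (indicator (ball x r) y :: real)" for n
    using qlt[of n] by (auto simp: indicator_def)
  then show ?thesis
    by simp
qed

lemma rat_seq_tendsto_left:
  fixes r :: real
  assumes "0 < r"
  obtains q where "\<And>n. q n \<in> \<rat>" "\<And>n. 0 < q n" "\<And>n. q n < r" "q \<longlonglongrightarrow> r"
proof -
  have "\<exists>t\<in>\<rat>. r - r / Suc n < t \<and> t < r" for n :: nat
    using assms by (intro Rats_dense_in_real) auto
  then obtain q where q: "\<And>n. q n \<in> \<rat>" "\<And>n. r - r / Suc n < q n" "\<And>n. q n < r"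
    by metis
  have low: "0 \<le> r - r / Suc n" for n
    using assms by (simp add: field_simps)
  have "(\<lambda>n. r - r * inverse (real (Suc n))) \<longlonglongrightarrow> r - r * 0"
    by (intro tendsto_diff tendsto_const tendsto_mult LIMSEQ_inverse_real_of_nat)
  then have lower: "(\<lambda>n. r - r / Suc n) \<longlonglongrightarrow> r"
    by (simp add: divide_inverse)
  have "q \<longlonglongrightarrow> r"
  proof (rule tendsto_sandwich[OF _ _ lower tendsto_const])
    show "\<forall>\<^sub>F n in sequentially. r - r / Suc n \<le> q n"
      by (intro always_eventually allI less_imp_le q(2))
    show "\<forall>\<^sub>F n in sequentially. q n \<le> r"
      by (intro always_eventually allI less_imp_le q(3))
  qed
  moreover have "0 < q n" for n
    using low[of n] q(2)[of n] by linarith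
  ultimately show ?thesis
    using q(1,3) by (intro that)
qed

lemma SUP_inter_eq_SUP_if:
  fixes f :: "'a \<Rightarrow> 'b::complete_lattice"
  shows "(SUP q\<in>A \<inter> B. f q) = (SUP q\<in>B. if q \<in> A then f q else bot)"
proof (rule antisym)
  show "(SUP q\<in>A \<inter> B. f q) \<le> (SUP q\<in>B. if q \<in> A then f q else bot)"
  proof (rule SUP_least)
    fix q assume "q \<in> A \<inter> B"
    then show "f q \<le> (SUP q\<in>B. if q \<in> A then f q else bot)"
      by (intro SUP_upper2[of q]) auto
  qed
  show "(SUP q\<in>B. if q \<in> A then f q else bot) \<le> (SUP q\<in>A \<inter> B. f q)"
    by (rule SUP_least) (auto intro: SUP_upper)
qed

lemma borel_measurable_indicator_ball_pair [measurable]: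
  "(\<lambda>z. indicator (ball (fst z) r) (snd z) :: 'b::{zero_neq_one, topological_space})
     \<in> borel_measurable (lborel \<Otimes>\<^sub>M (lborel :: 'a::euclidean_space measure))"
proof -
  have eq: "(\<lambda>z. indicator (ball (fst z) r) (snd z) :: 'b)
      = (\<lambda>z. if dist (fst z) (snd z) < r then 1 else 0)"
    by (auto simp: indicator_def fun_eq_iff)
  show ?thesis
    unfolding eq by measurable
qed

locale ball_integrable_borel =
  fixes g :: "'a::euclidean_space \<Rightarrow> real"
  assumes g_borel: "g \<in> borel_measurable borel"
    and g_integrable_ball: "\<And>x r. set_integrable lborel (ball x r) g"
begin

declare g_borel [measurable]

lemma integrable_indicator_ball_mult: "integrable lborel (\<lambda>y. indicator (ball x r) y * g y)"
  using g_integrable_ball[of x r] unfolding set_integrable_def by simp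

lemma ball_avg_eq_integral_lborel:
  assumes "0 \<le> r"
  shows "ball_avg g x r
    = (\<integral>y. indicator (ball x r) y * g y \<partial>lborel) / (unit_ball_vol DIM('a) * r ^ DIM('a))"
proof -
  have "(LINT y:ball x r|lebesgue. g y) = (\<integral>y. indicator (ball x r) y * g y \<partial>lborel)"
    unfolding set_lebesgue_integral_def
    by (subst integral_completion) (auto intro!: borel_measurable_times borel_measurable_indicator)
  moreover have "measure lebesgue (ball x r) = unit_ball_vol DIM('a) * r ^ DIM('a)"
    using content_ball[where c=x and r=r] assms by simp
  ultimately show ?thesis
    unfolding ball_avg_def by simp
qed

lemma osc_eq_nn_integral_lborel:
  "osc s g x r = ennreal (1 / r powr (s + DIM('a))) *
     (\<integral>\<^sup>+ y. ennreal \<bar>g y - ball_avg g x r\<bar> * indicator (ball x r) y \<partial>lborel)"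
  unfolding osc_def by (simp add: nn_integral_completion)

lemma borel_measurable_ball_avg [measurable]:
  assumes "0 \<le> r"
  shows "(\<lambda>x. ball_avg g x r) \<in> borel_measurable lborel"
proof -
  have "(\<lambda>x. \<integral>y. indicator (ball x r) y * g y \<partial>lborel) \<in> borel_measurable lborel"
    by (rule lborel.borel_measurable_lebesgue_integral) (simp add: split_beta')
  then show ?thesis
    unfolding ball_avg_eq_integral_lborel[OF assms] by simp
qed

lemma borel_measurable_osc [measurable]:
  assumes "0 \<le> r"
  shows "(\<lambda>x. osc s g x r) \<in> borel_measurable lborel"
proof -
  note borel_measurable_ball_avg[OF assms, measurable]
  have "(\<lambda>x. \<integral>\<^sup>+ y. ennreal \<bar>g y - ball_avg g x r\<bar> * indicator (ball x r) y \<partial>lborel)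
      \<in> borel_measurable lborel"
    by (rule lborel.borel_measurable_nn_integral) (simp add: split_beta')
  then show ?thesis
    unfolding osc_eq_nn_integral_lborel by simp
qed

lemma integrable_abs_diff_indicator_ball:
  "integrable lborel (\<lambda>y. \<bar>g y - a\<bar> * indicator (ball x r) y)"
proof -
  have "integrable lborel (\<lambda>y. \<bar>indicator (ball x r) y * g y - a * indicator (ball x r) y\<bar>)"
    by (intro integrable_abs Bochner_Integration.integrable_diff integrable_indicator_ball_mult
        integrable_mult_right integrable_real_indicator emeasure_lborel_ball_finite) auto
  also have "(\<lambda>y. \<bar>indicator (ball x r) y * g y - a * indicator (ball x r) y\<bar>)
      = (\<lambda>y. \<bar>g y - a\<bar> * indicator (ball x r) y)"
    by (auto simp: indicator_def fun_eq_iff)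
  finally show ?thesis .
qed

lemma osc_eq_ennreal_integral:
  "osc s g x r = ennreal (1 / r powr (s + DIM('a)) *
     (\<integral>y. \<bar>g y - ball_avg g x r\<bar> * indicator (ball x r) y \<partial>lborel))"
proof -
  have "(\<integral>\<^sup>+ y. ennreal \<bar>g y - ball_avg g x r\<bar> * indicator (ball x r) y \<partial>lborel)
      = (\<integral>\<^sup>+ y. ennreal (\<bar>g y - ball_avg g x r\<bar> * indicator (ball x r) y) \<partial>lborel)"
    by (intro nn_integral_cong) (auto simp: indicator_def)
  also have "\<dots> = ennreal (\<integral>y. \<bar>g y - ball_avg g x r\<bar> * indicator (ball x r) y \<partial>lborel)"
    by (intro nn_integral_eq_integral integrable_abs_diff_indicator_ball AE_I2) auto
  finally show ?thesis
    unfolding osc_eq_nn_integral_lborel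
    by (simp add: ennreal_mult''[symmetric] integral_nonneg_AE)
qed

lemma ball_avg_tendsto_left:
  fixes q :: "nat \<Rightarrow> real"
  assumes r: "0 < r" and q: "\<And>n. 0 \<le> q n" "\<And>n. q n < r" and ql: "q \<longlonglongrightarrow> r"
  shows "(\<lambda>n. ball_avg g x (q n)) \<longlonglongrightarrow> ball_avg g x r"
proof -
  have int: "(\<lambda>n. \<integral>y. indicator (ball x (q n)) y * g y \<partial>lborel)
      \<longlonglongrightarrow> (\<integral>y. indicator (ball x r) y * g y \<partial>lborel)"
  proof (rule integral_dominated_convergence[where w="\<lambda>y. indicator (ball x r) y * \<bar>g y\<bar>"])
    show "integrable lborel (\<lambda>y. indicator (ball x r) y * \<bar>g y\<bar>)"
      using integrable_abs[OF integrable_indicator_ball_mult] by (simp add: abs_mult)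
    show "AE y in lborel. (\<lambda>n. indicator (ball x (q n)) y * g y) \<longlonglongrightarrow> indicator (ball x r) y * g y"
      by (intro AE_I2 tendsto_mult indicator_ball_tendsto_left[OF q(2) ql] tendsto_const)
    show "AE y in lborel. norm (indicator (ball x (q n)) y * g y) \<le> indicator (ball x r) y * \<bar>g y\<bar>"
      for n using q(2)[of n] by (intro AE_I2) (auto simp: indicator_def abs_mult)
  qed (auto intro!: borel_measurable_times borel_measurable_indicator)
  have "unit_ball_vol DIM('a) * r ^ DIM('a) \<noteq> 0"
    using r by (intro dual_order.strict_implies_not_eq mult_pos_pos unit_ball_vol_pos) auto
  then have "(\<lambda>n. (\<integral>y. indicator (ball x (q n)) y * g y \<partial>lborel) / (unit_ball_vol DIM('a) * q n ^ DIM('a)))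
      \<longlonglongrightarrow> (\<integral>y. indicator (ball x r) y * g y \<partial>lborel) / (unit_ball_vol DIM('a) * r ^ DIM('a))"
    by (intro tendsto_divide int tendsto_mult tendsto_const tendsto_power ql)
  then show ?thesis
    using r q by (simp add: ball_avg_eq_integral_lborel)
qed

lemma integral_abs_diff_ball_avg_tendsto_left:
  fixes q :: "nat \<Rightarrow> real"
  assumes r: "0 < r" and q: "\<And>n. 0 \<le> q n" "\<And>n. q n < r" and ql: "q \<longlonglongrightarrow> r"
  shows "(\<lambda>n. \<integral>y. \<bar>g y - ball_avg g x (q n)\<bar> * indicator (ball x (q n)) y \<partial>lborel)
    \<longlonglongrightarrow> (\<integral>y. \<bar>g y - ball_avg g x r\<bar> * indicator (ball x r) y \<partial>lborel)"
proof -
  have avg: "(\<lambda>n. ball_avg g x (q n)) \<longlonglongrightarrow> ball_avg g x r"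
    by (rule ball_avg_tendsto_left[OF r q ql])
  then obtain K where K: "\<And>n. \<bar>ball_avg g x (q n)\<bar> \<le> K"
    by (metis BseqE convergent_imp_Bseq convergentI real_norm_def)
  define w where "w y = indicator (ball x r) y * \<bar>g y\<bar> + K * indicator (ball x r) y" for y
  show ?thesis
  proof (rule integral_dominated_convergence[where w=w])
    show "integrable lborel w"
      unfolding w_def
      using integrable_abs[OF integrable_indicator_ball_mult]
      by (intro Bochner_Integration.integrable_add integrable_mult_right integrable_real_indicator
          emeasure_lborel_ball_finite) (auto simp: abs_mult)
    show "AE y in lborel. (\<lambda>n. \<bar>g y - ball_avg g x (q n)\<bar> * indicator (ball x (q n)) y)
        \<longlonglongrightarrow> \<bar>g y - ball_avg g x r\<bar> * indicator (ball x r) y"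
      by (intro AE_I2 tendsto_mult indicator_ball_tendsto_left[OF q(2) ql] tendsto_rabs
          tendsto_diff tendsto_const avg)
    show "AE y in lborel. norm (\<bar>g y - ball_avg g x (q n)\<bar> * indicator (ball x (q n)) y) \<le> w y" for n
    proof (intro AE_I2)
      fix y
      have "\<bar>g y - ball_avg g x (q n)\<bar> \<le> \<bar>g y\<bar> + K"
        using K[of n] by linarith
      then show "norm (\<bar>g y - ball_avg g x (q n)\<bar> * indicator (ball x (q n)) y) \<le> w y"
        using q(2)[of n] by (auto simp: w_def indicator_def)
    qed
  qed (auto intro!: borel_measurable_times borel_measurable_abs borel_measurable_diff
      borel_measurable_indicator)
qed

lemma osc_tendsto_left:
  fixes q :: "nat \<Rightarrow> real"
  assumes r: "0 < r" and q: "\<And>n. 0 < q n" "\<And>n. q n < r" and ql: "q \<longlonglongrightarrow> r"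
  shows "(\<lambda>n. osc s g x (q n)) \<longlonglongrightarrow> osc s g x r"
  unfolding osc_eq_ennreal_integral
  using r q
  by (intro tendsto_ennrealI tendsto_mult tendsto_divide tendsto_powr tendsto_const ql
      integral_abs_diff_ball_avg_tendsto_left[OF r _ q(2) ql]) (auto intro: less_imp_le)

lemma osc_le_SUP_rat_radii:
  assumes r: "0 < r"
  shows "osc s g x r \<le> (SUP t\<in>{t\<in>\<rat>. 0 < t \<and> t < r}. osc s g x t)"
proof -
  obtain q where q: "\<And>n. q n \<in> \<rat>" "\<And>n. 0 < q n" "\<And>n. q n < r" "q \<longlonglongrightarrow> r"
    using rat_seq_tendsto_left[OF r] by metis
  show ?thesis
    using q by (intro tendsto_upperbound[OF osc_tendsto_left[OF r q(2-4)]] always_eventually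
        allI SUP_upper) auto
qed

lemma SUP_osc_eq_SUP_rat:
  assumes pos: "\<And>r. r \<in> A \<Longrightarrow> 0 < r" and down: "\<And>r t. r \<in> A \<Longrightarrow> 0 < t \<Longrightarrow> t < r \<Longrightarrow> t \<in> A"
  shows "(SUP r\<in>A. osc s g x r) = (SUP r\<in>A \<inter> \<rat>. osc s g x r)"
proof (rule antisym)
  show "(SUP r\<in>A. osc s g x r) \<le> (SUP r\<in>A \<inter> \<rat>. osc s g x r)"
  proof (rule SUP_least)
    fix r assume r: "r \<in> A"
    have "osc s g x r \<le> (SUP t\<in>{t\<in>\<rat>. 0 < t \<and> t < r}. osc s g x t)"
      using pos[OF r] by (rule osc_le_SUP_rat_radii)
    also have "\<dots> \<le> (SUP r\<in>A \<inter> \<rat>. osc s g x r)"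
      using down[OF r] by (intro SUP_subset_mono) auto
    finally show "osc s g x r \<le> (SUP r\<in>A \<inter> \<rat>. osc s g x r)" .
  qed
  show "(SUP r\<in>A \<inter> \<rat>. osc s g x r) \<le> (SUP r\<in>A. osc s g x r)"
    by (intro SUP_subset_mono) auto
qed

lemma borel_measurable_sharp_trunc_pair:
  "(\<lambda>z. sharp_trunc (1 / snd z) s g (fst z)) \<in> borel_measurable (lborel \<Otimes>\<^sub>M lborel)"
proof -
  have "sharp_trunc a s g x = (SUP r\<in>\<rat>. if 0 < r \<and> r < a then osc s g x r else 0)" for a x
    unfolding sharp_trunc_def
    by (subst SUP_osc_eq_SUP_rat) (auto simp: SUP_inter_eq_SUP_if bot_ennreal)
  then have "(\<lambda>z. sharp_trunc (1 / snd z) s g (fst z))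
      = (\<lambda>z. SUP r\<in>\<rat>. if 0 < r \<and> r < 1 / snd z then osc s g (fst z) r else 0)"
    by simp
  also have "\<dots> \<in> borel_measurable (lborel \<Otimes>\<^sub>M lborel)"
  proof (intro borel_measurable_SUP countable_rat)
    fix r :: real
    show "(\<lambda>z. if 0 < r \<and> r < 1 / snd z then osc s g (fst z) r else 0)
        \<in> borel_measurable (lborel \<Otimes>\<^sub>M lborel)"
    proof (cases "0 < r")
      case True
      then have [measurable]: "(\<lambda>z. osc s g (fst z) r) \<in> borel_measurable (lborel \<Otimes>\<^sub>M lborel)"
        by (intro measurable_compose[OF measurable_fst borel_measurable_osc]) auto
      show ?thesis
        by measurable
    qed simp
  qed
  finally show ?thesis .
qed

end

section \<open>The level quantity as an integral over sections\<close>

definition sharp_level_set :: "real \<Rightarrow> real \<Rightarrow> ('a::euclidean_space \<Rightarrow> real) \<Rightarrow> real \<Rightarrow> ('a \<times> real) set"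
  where "sharp_level_set s p f lam =
    {(x, R). 0 < R \<and> sharp_trunc (1 / R) s f x * ennreal (R powr (- 1 / p)) > ennreal lam}"

lemma level_quantity_eq:
  "level_quantity s p f lam = ennreal (lam powr p) * emeasure lebesgue (sharp_level_set s p f lam)"
  unfolding level_quantity_def sharp_level_set_def ..

lemma Pair_vimage_sharp_level_set:
  "Pair x -` sharp_level_set s p f lam = radial_level_set (osc s f x) p lam"
  by (auto simp: sharp_level_set_def radial_level_set_def sharp_trunc_def)

context ball_integrable_borel
begin

lemma sharp_level_set_measurable:
  "sharp_level_set s p g lam \<in> sets (lborel \<Otimes>\<^sub>M lborel)"
proof -
  note borel_measurable_sharp_trunc_pair[measurable]
  have "sharp_level_set s p g lam = {z \<in> space (lborel \<Otimes>\<^sub>M lborel).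
      0 < snd z \<and> sharp_trunc (1 / snd z) s g (fst z) * ennreal (snd z powr (- 1 / p)) > ennreal lam}"
    by (auto simp: sharp_level_set_def space_pair_measure)
  also have "\<dots> \<in> sets (lborel \<Otimes>\<^sub>M lborel)"
    by measurable
  finally show ?thesis .
qed

lemma borel_measurable_radial_level_measure [measurable]:
  "(\<lambda>x. emeasure lborel (radial_level_set (osc s g x) p lam)) \<in> borel_measurable lborel"
  unfolding Pair_vimage_sharp_level_set[symmetric]
  by (rule lborel.measurable_emeasure_Pair[OF sharp_level_set_measurable])

lemma level_quantity_eq_nn_integral:
  "level_quantity s p g lam
    = (\<integral>\<^sup>+ x. ennreal (lam powr p) * emeasure lborel (radial_level_set (osc s g x) p lam) \<partial>lborel)"
proof -
  note E = sharp_level_set_measurable[of s p lam]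
  then have "sharp_level_set s p g lam \<in> sets (lborel :: ('a \<times> real) measure)"
    unfolding lborel_prod .
  then have "emeasure lebesgue (sharp_level_set s p g lam)
      = emeasure (lborel \<Otimes>\<^sub>M lborel) (sharp_level_set s p g lam)"
    by (simp add: lborel_prod)
  also have "\<dots> = (\<integral>\<^sup>+ x. emeasure lborel (radial_level_set (osc s g x) p lam) \<partial>lborel)"
    unfolding lborel.emeasure_pair_measure_alt[OF E] Pair_vimage_sharp_level_set ..
  finally show ?thesis
    by (simp add: level_quantity_eq nn_integral_cmult borel_measurable_radial_level_measure)
qed

lemma level_quantity_tendsto_and_eq_SUP:
  assumes p: "0 < p"
  shows "((level_quantity s p g) \<longlongrightarrow> (\<integral>\<^sup>+ x. enn_powr (sharp s g x) p \<partial>lebesgue)) at_top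
    \<and> (\<integral>\<^sup>+ x. enn_powr (sharp s g x) p \<partial>lebesgue) = (SUP lam\<in>{0<..}. level_quantity s p g lam)"
proof -
  have bound: "level_quantity s p g lam \<le> (\<integral>\<^sup>+ x. enn_powr (sharp s g x) p \<partial>lborel)"
    if "0 < lam" for lam
    unfolding level_quantity_eq_nn_integral sharp_def
    by (intro nn_integral_mono radial_level_measure_le p that)
  have "((level_quantity s p g) \<longlongrightarrow> (\<integral>\<^sup>+ x. enn_powr (sharp s g x) p \<partial>lborel)) at_top"
    unfolding level_quantity_eq_nn_integral[abs_def] sharp_def
  proof (rule nn_integral_tendsto_at_top)
    show "(\<lambda>x. ennreal (lam powr p) * emeasure lborel (radial_level_set (osc s g x) p lam))
        \<in> borel_measurable lborel" for lam
      by measurable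
    show "((\<lambda>lam. ennreal (lam powr p) * emeasure lborel (radial_level_set (osc s g x) p lam))
        \<longlongrightarrow> enn_powr (SUP r\<in>{0<..}. osc s g x r) p) at_top" for x
      by (rule radial_level_measure_tendsto[OF p])
    show "\<forall>\<^sub>F lam in at_top. \<forall>x. ennreal (lam powr p) * emeasure lborel (radial_level_set (osc s g x) p lam)
        \<le> enn_powr (SUP r\<in>{0<..}. osc s g x r) p"
      using eventually_gt_at_top[of 0]
      by eventually_elim (intro allI radial_level_measure_le[OF p])
  qed
  with bound show ?thesis
    by (simp add: nn_integral_completion tendsto_at_top_eq_SUP)
qed

end

section \<open>Passing to a Borel representative\<close>

lemma locally_integrable_borel_measurable:
  assumes "locally_integrable (f :: 'a::euclidean_space \<Rightarrow> real)"
  shows "f \<in> borel_measurable lebesgue"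
proof (rule borel_measurable_LIMSEQ_real[where u="\<lambda>n y. indicator (cball 0 (real n)) y * f y"])
  fix y :: 'a
  have "\<forall>\<^sub>F n in sequentially. norm y \<le> real n"
    by (rule eventually_sequentiallyI[of "nat \<lceil>norm y\<rceil>"]) linarith
  then have "\<forall>\<^sub>F n in sequentially. indicator (cball 0 (real n)) y * f y = f y"
    by eventually_elim simp
  then show "(\<lambda>n. indicator (cball 0 (real n)) y * f y) \<longlonglongrightarrow> f y"
    by (rule tendsto_eventually)
next
  fix n
  have "set_integrable lebesgue (cball 0 (real n)) f"
    using assms unfolding locally_integrable_def by simp
  then show "(\<lambda>y. indicator (cball 0 (real n)) y * f y) \<in> borel_measurable lebesgue"
    unfolding set_integrable_def by (simp add: borel_measurable_integrable)
qed

lemma locally_integrable_borel_representative: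
  fixes f :: "'a::euclidean_space \<Rightarrow> real"
  assumes f: "locally_integrable f"
  obtains g where "ball_integrable_borel g" "AE x in lebesgue. f x = g x"
proof -
  obtain g where g: "g \<in> borel_measurable lborel" and "AE x in lborel. f x = g x"
    using completion_ex_borel_measurable_real[OF locally_integrable_borel_measurable[OF f]] by blast
  from \<open>AE x in lborel. f x = g x\<close> have ae: "AE x in lebesgue. f x = g x"
    by (rule AE_completion)
  have "set_integrable lborel (ball x r) g" for x r
  proof -
    have "set_integrable lebesgue (cball x r) f"
      using f unfolding locally_integrable_def by simp
    then have "set_integrable lebesgue (ball x r) f"
      by (rule set_integrable_subset) auto
    moreover have m: "(\<lambda>y. indicator (ball x r) y *\<^sub>R g y) \<in> borel_measurable lborel"
      using g by (intro borel_measurable_scaleR borel_measurable_indicator) auto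
    then have "(\<lambda>y. indicator (ball x r) y *\<^sub>R g y) \<in> borel_measurable lebesgue"
      by (rule measurable_completion)
    moreover have "AE y in lebesgue. indicator (ball x r) y *\<^sub>R f y = indicator (ball x r) y *\<^sub>R g y"
      using ae by eventually_elim simp
    ultimately have "integrable lebesgue (\<lambda>y. indicator (ball x r) y *\<^sub>R g y)"
      unfolding set_integrable_def by (rule integrable_cong_AE_imp)
    then show ?thesis
      unfolding set_integrable_def integrable_completion[OF m] .
  qed
  with g ae show ?thesis
    by (intro that ball_integrable_borel.intro) auto
qed

lemma osc_cong_AE:
  fixes f g :: "'a::euclidean_space \<Rightarrow> real"
  assumes f: "f \<in> borel_measurable lebesgue" and g: "g \<in> borel_measurable lebesgue"
    and ae: "AE x in lebesgue. f x = g x"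
  shows "osc s f = osc s g"
proof (intro ext)
  fix x :: 'a and r :: real
  have ball: "ball x r \<in> sets lebesgue"
    by (intro sets_completionI_sets) simp
  have "AE y in lebesgue. indicator (ball x r) y *\<^sub>R f y = indicator (ball x r) y *\<^sub>R g y"
    using ae by eventually_elim simp
  then have "(LINT y:ball x r|lebesgue. f y) = (LINT y:ball x r|lebesgue. g y)"
    unfolding set_lebesgue_integral_def using ball f g
    by (intro integral_cong_AE) (auto intro!: borel_measurable_times borel_measurable_indicator)
  then have avg: "ball_avg f x r = ball_avg g x r"
    by (simp add: ball_avg_def)
  have "(\<integral>\<^sup>+ y. ennreal \<bar>f y - ball_avg g x r\<bar> * indicator (ball x r) y \<partial>lebesgue)
      = (\<integral>\<^sup>+ y. ennreal \<bar>g y - ball_avg g x r\<bar> * indicator (ball x r) y \<partial>lebesgue)"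
    using ae by (intro nn_integral_cong_AE) (auto elim: eventually_mono)
  then show "osc s f x r = osc s g x r"
    unfolding osc_def avg by simp
qed

theorem mainTheorem8:
  fixes f :: "'a::euclidean_space \<Rightarrow> real" and s p :: real
  assumes "0 \<le> s" "s \<le> 1" "1 < p" "locally_integrable f"
  shows "((level_quantity s p f) \<longlongrightarrow> (\<integral>\<^sup>+ x. enn_powr (sharp s f x) p \<partial>lebesgue)) at_top
    \<and> (\<integral>\<^sup>+ x. enn_powr (sharp s f x) p \<partial>lebesgue) = (SUP lam\<in>{0<..}. level_quantity s p f lam)"
proof -
  obtain g where g: "ball_integrable_borel g" and ae: "AE x in lebesgue. f x = g x"
    using locally_integrable_borel_representative[OF assms(4)] by blast
  interpret ball_integrable_borel g
    by (fact g)
  have "osc s f = osc s g"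
    using ae g_borel by (intro osc_cong_AE locally_integrable_borel_measurable[OF assms(4)]
        measurable_completion) auto
  then have eqs: "sharp s f = sharp s g" "level_quantity s p f = level_quantity s p g"
    unfolding sharp_def level_quantity_def sharp_trunc_def by simp_all
  show ?thesis
    unfolding eqs using assms(3) by (intro level_quantity_tendsto_and_eq_SUP) simp
qed

end
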